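(* Let $\Psi\in\Delta_7$ be a spinor of unit length and let $\omega^3\in\Lambda^3(\mathbb{R}^7)$ be defined by $\omega^3(X,Y,Z):=-\big(X\cdot Y\cdot Z\cdot\Psi,\Psi\big)$. Let $p,q,r\in\mathbb{R}$. Then the equation $$\Big(X+\tfrac r4\,(X\lrcorner\omega^3)+p\,(X\lrcorner *\omega^3)+q\,(X\wedge *\omega^3)\Big)\cdot\Psi=0$$ holds for all vectors $X\in\mathbb{R}^7$ if and only if $16p=-4+12q-3r$.
   Context: $\mathbb{R}^7$ carries the Euclidean metric; $\Delta_7$ is the real $8$-dimensional spin representation with $\mathrm{Spin}(7)$-invariant inner product $(\cdot,\cdot)$ for which Clifford multiplication by vectors is skew-symmetric; Clifford multiplication satisfies $X\cdot X=-|X|^2$, and $k$-forms act by Clifford multiplication ($e_{i_1}\wedge\cdots\wedge e_{i_k}\mapsto e_{i_1}\cdots e_{i_k}$ for an orthonormal basis, distinct indices). For such $\Psi$ one has $\omega^3\cdot\Psi=-7\Psi$. $*$ is the Hodge star of the Euclidean metric for the orientation of $\mathbb{R}^7$ fixed by the chosen realization of the spin representation; with this orientation $( *\omega^3)\cdot\Psi=-7\Psi$. *)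

theory Defs
  imports "HOL-Analysis.Analysis"
begin

text \<open>R^7 is real^7 with orthonormal basis e_0,...,e_6 (coordinate i of X is
  X $ of_nat i). The spin representation Delta_7 is realised as real^8 with its standard inner
  product; Clifford multiplication by e_i is the matrix gamma i (i < 7).
  Differential forms are represented by their components: a k-form alpha is a function
  nat list => real, alpha [i1,...,ik] = alpha(e_i1,...,e_ik).\<close>

definition coord7 :: "real^7 \<Rightarrow> nat \<Rightarrow> real" where
  "coord7 X i = X $ (of_nat i :: 7)"

definition gprod :: "(nat \<Rightarrow> real^8^8) \<Rightarrow> nat list \<Rightarrow> real^8^8" where
  "gprod gamma xs = foldr (\<lambda>i M. gamma i ** M) xs (mat 1)"

definition cliff_vec :: "(nat \<Rightarrow> real^8^8) \<Rightarrow> real^7 \<Rightarrow> real^8^8" where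
  "cliff_vec gamma X = (\<Sum>i<7. coord7 X i *\<^sub>R gamma i)"

text \<open>Clifford action of a k-form: e_i1 /\ ... /\ e_ik (i1<...<ik) acts as gamma_i1 ... gamma_ik.\<close>
definition form_act :: "(nat \<Rightarrow> real^8^8) \<Rightarrow> nat \<Rightarrow> (nat list \<Rightarrow> real) \<Rightarrow> real^8^8" where
  "form_act gamma k alpha =
     (\<Sum>I\<in>{I. I \<subseteq> {..<7} \<and> card I = k}.
        alpha (sorted_list_of_set I) *\<^sub>R gprod gamma (sorted_list_of_set I))"

definition omega3 :: "(nat \<Rightarrow> real^8^8) \<Rightarrow> real^8 \<Rightarrow> nat list \<Rightarrow> real" where
  "omega3 gamma Psi l = - ((gprod gamma l *v Psi) \<bullet> Psi)"

definition contr :: "real^7 \<Rightarrow> (nat list \<Rightarrow> real) \<Rightarrow> nat list \<Rightarrow> real" where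
  "contr X alpha l = (\<Sum>a<7. coord7 X a * alpha (a # l))"

definition levi :: "nat list \<Rightarrow> real" where
  "levi xs = (if length xs = 7 \<and> set xs = {..<7}
     then (\<Prod>i<7. \<Prod>j<7. if i < j then sgn (real (xs ! j) - real (xs ! i)) else 1)
     else 0)"

text \<open>Hodge star of a 3-form on R^7 (orientation e_0 /\ ... /\ e_6):
  ( *alpha)_{defg} = 1/3! * sum alpha_{abc} eps_{abcdefg}.\<close>
definition hodge3 :: "(nat list \<Rightarrow> real) \<Rightarrow> nat list \<Rightarrow> real" where
  "hodge3 alpha l = (1/6) * (\<Sum>a<7. \<Sum>b<7. \<Sum>c<7. alpha [a,b,c] * levi ([a,b,c] @ l))"

definition wedge1 :: "real^7 \<Rightarrow> (nat list \<Rightarrow> real) \<Rightarrow> nat list \<Rightarrow> real" where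
  "wedge1 X beta l = (\<Sum>s<length l. (-1) ^ s * coord7 X (l ! s) * beta (take s l @ drop (Suc s) l))"

end

theory Submission
  imports Defs "HOL-Combinatorics.Multiset_Permutations"
begin

(* The vectors Psi, e_0 Psi, ..., e_6 Psi form an orthonormal frame of Delta_7, and in this frame
   e_b e_j Psi = sum_k omega(e_b, e_j, e_k) e_k Psi for b ~= j. Contracting this identity shows
   (X _| omega) Psi = 3 X Psi. Because the volume element acts as 1, a product of four generators
   is, up to the Levi-Civita sign, the product of the three complementary ones; so the actions of
   X _| *omega and X /\ *omega on Psi reduce to actions of parts of omega, which are evaluated
   using omega Psi = -7 Psi: they give 4 X Psi and -3 X Psi. Hence the left-hand side is
   (1 + 3r/4 + 4p - 3q) X Psi, and X Psi ~= 0 for X ~= 0. *)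

definition insort_sign :: "nat \<Rightarrow> nat list \<Rightarrow> real" where
  "insort_sign b ys = (-1) ^ length (takeWhile (\<lambda>y. y < b) ys)"

definition inversion_sign :: "nat list \<Rightarrow> real" where
  "inversion_sign xs =
     (\<Prod>i<length xs. \<Prod>j<length xs. if i < j then sgn (real (xs ! j) - real (xs ! i)) else 1)"

lemma insort_eq_takeWhile_dropWhile:
  "b \<notin> set ys \<Longrightarrow> insort b ys = takeWhile (\<lambda>y. y < b) ys @ b # dropWhile (\<lambda>y. y < b) ys"
  by (induction ys) auto

lemma insort_sign_square: "insort_sign b ys * insort_sign b ys = 1"
  by (simp add: insort_sign_def flip: power_add)

lemma inversion_sign_Nil [simp]: "inversion_sign [] = 1"
  by (simp add: inversion_sign_def)

lemma inversion_sign_Cons: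
  "inversion_sign (a # l) = (\<Prod>j<length l. sgn (real (l ! j) - real a)) * inversion_sign l"
  unfolding inversion_sign_def length_Cons prod.lessThan_Suc_shift
  by (simp only: nth_Cons_Suc nth_Cons_0 if_True if_False mult_1_left mult_1_right zero_less_Suc
      Suc_less_eq not_less_zero less_irrefl prod.neutral_const)

lemma levi_eq_inversion_sign:
  "levi xs = (if length xs = 7 \<and> set xs = {..<7} then inversion_sign xs else 0)"
  by (simp add: levi_def inversion_sign_def)

lemma takeWhile_less_sorted:
  "sorted xs \<Longrightarrow> takeWhile (\<lambda>y. y < (a::nat)) xs = filter (\<lambda>y. y < a) xs"
proof (induction xs)
  case (Cons x xs)
  show ?case
  proof (cases "x < a")
    case False
    with Cons.prems have "filter (\<lambda>y. y < a) xs = []"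
      by (auto simp: filter_empty_conv)
    with False show ?thesis by simp
  qed (use Cons in simp)
qed simp

lemma insort_sign_sort:
  assumes "distinct l"
  shows "insort_sign a (sort l) = (-1) ^ card {x \<in> set l. x < a}"
proof -
  have "length (takeWhile (\<lambda>y. y < a) (sort l)) = length (filter (\<lambda>y. y < a) l)"
    by (metis takeWhile_less_sorted sorted_sort filter_sort length_sort)
  also have "\<dots> = card {x \<in> set l. x < a}"
    using assms by (simp add: distinct_card[symmetric] set_filter)
  finally show ?thesis by (simp add: insort_sign_def)
qed

lemma inversion_sign_Cons_distinct:
  assumes "distinct (a # l)"
  shows "inversion_sign (a # l) = insort_sign a (sort l) * inversion_sign l"
proof -
  have "(\<Prod>j<length l. sgn (real (l ! j) - real a)) = (\<Prod>x\<in>set l. sgn (real x - real a))"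
    using prod.reindex_bij_betw[OF bij_betw_nth[of l "{..<length l}" "set l"]] assms by simp
  also have "\<dots> = (\<Prod>x\<in>set l. if x < a then -1 else 1)"
    by (rule prod.cong) (use assms in \<open>auto simp: sgn_if\<close>)
  also have "\<dots> = (-1) ^ card {x \<in> set l. x < a}"
    by (simp add: prod.If_cases Int_def conj_commute)
  finally show ?thesis
    using assms by (simp add: inversion_sign_Cons insort_sign_sort)
qed

lemma inversion_sign_square: "distinct xs \<Longrightarrow> inversion_sign xs * inversion_sign xs = 1"
proof (induction xs)
  case (Cons a l)
  then have "inversion_sign (a # l) * inversion_sign (a # l)
      = (insort_sign a (sort l) * insort_sign a (sort l)) * (inversion_sign l * inversion_sign l)"
    by (simp add: inversion_sign_Cons_distinct algebra_simps)
  with Cons show ?case by (simp add: insort_sign_square)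
qed simp

definition k_subsets :: "'a set \<Rightarrow> nat \<Rightarrow> 'a set set" where
  "k_subsets A k = {J. J \<subseteq> A \<and> card J = k}"

definition k_lists :: "'a set \<Rightarrow> nat \<Rightarrow> 'a list set" where
  "k_lists A k = {xs. set xs \<subseteq> A \<and> length xs = k}"

lemma finite_k_subsets [simp]: "finite A \<Longrightarrow> finite (k_subsets A k)"
  unfolding k_subsets_def by (rule finite_subset[of _ "Pow A"]) auto

lemma finite_k_lists [simp]: "finite A \<Longrightarrow> finite (k_lists A k)"
  unfolding k_lists_def by (rule finite_lists_length_eq)

lemma k_subsetsD:
  "J \<in> k_subsets A k \<Longrightarrow> finite A \<Longrightarrow> J \<subseteq> A \<and> card J = k \<and> finite J"
  by (auto simp: k_subsets_def intro: finite_subset)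

lemma sum_k_subsets_Suc_member:
  assumes "b \<in> A" "finite A"
  shows "(\<Sum>J\<in>{J \<in> k_subsets A (Suc k). b \<in> J}. f J) = (\<Sum>T\<in>{T \<in> k_subsets A k. b \<notin> T}. f (insert b T))"
proof -
  have "bij_betw (insert b) {T \<in> k_subsets A k. b \<notin> T} {J \<in> k_subsets A (Suc k). b \<in> J}"
    by (rule bij_betw_byWitness[where f' = "\<lambda>J. J - {b}"])
       (use assms in \<open>auto simp: k_subsets_def card_insert_if finite_subset\<close>)
  then show ?thesis by (simp add: sum.reindex_bij_betw)
qed

lemma sum_k_lists_Suc:
  "(\<Sum>xs\<in>k_lists A (Suc k). f xs) = (\<Sum>a\<in>A. \<Sum>xs\<in>k_lists A k. f (a # xs))"
proof -
  have "k_lists A (Suc k) = (\<lambda>(a, xs). a # xs) ` (A \<times> k_lists A k)"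
    by (auto simp: k_lists_def length_Suc_conv image_iff)
  moreover have "inj_on (\<lambda>(a, xs). a # xs) (A \<times> k_lists A k)"
    by (auto simp: inj_on_def)
  ultimately show ?thesis
    by (simp add: sum.reindex sum.cartesian_product split_def)
qed

lemma k_lists_0 [simp]: "k_lists A 0 = {[]}"
  by (auto simp: k_lists_def)

lemma sum_k_lists_2: "(\<Sum>xs\<in>k_lists A 2. f xs) = (\<Sum>a\<in>A. \<Sum>b\<in>A. f [a, b])"
  by (simp add: numeral_2_eq_2 sum_k_lists_Suc)

lemma sum_k_lists_3: "(\<Sum>xs\<in>k_lists A 3. f xs) = (\<Sum>a\<in>A. \<Sum>b\<in>A. \<Sum>c\<in>A. f [a, b, c])"
  by (simp add: numeral_3_eq_3 sum_k_lists_Suc)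

lemma sum_distinct_k_lists:
  fixes F :: "'a list \<Rightarrow> 'b::real_vector"
  assumes "finite A"
    and "\<And>xs. distinct xs \<Longrightarrow> set xs \<subseteq> A \<Longrightarrow> length xs = k \<Longrightarrow> F xs = G (set xs)"
  shows "(\<Sum>xs\<in>k_lists A k. if distinct xs \<and> P (set xs) then F xs else 0)
         = (\<Sum>U\<in>{U \<in> k_subsets A k. P U}. fact k *\<^sub>R G U)"
proof -
  have "(\<Sum>xs\<in>k_lists A k. if distinct xs \<and> P (set xs) then F xs else 0)
      = sum F {xs \<in> k_lists A k. distinct xs \<and> P (set xs)}"
    by (simp add: sum.inter_filter assms(1))
  also have "{xs \<in> k_lists A k. distinct xs \<and> P (set xs)}
      = (\<Union>U\<in>{U \<in> k_subsets A k. P U}. permutations_of_set U)"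
    by (auto simp: k_lists_def k_subsets_def permutations_of_set_def distinct_card)
  also have "sum F \<dots> = (\<Sum>U\<in>{U \<in> k_subsets A k. P U}. sum F (permutations_of_set U))"
    by (rule sum.UNION_disjoint) (use assms(1) in \<open>auto dest: permutations_of_setD\<close>)
  also have "\<dots> = (\<Sum>U\<in>{U \<in> k_subsets A k. P U}. fact k *\<^sub>R G U)"
  proof (rule sum.cong[OF refl])
    fix U assume "U \<in> {U \<in> k_subsets A k. P U}"
    then have U: "U \<subseteq> A" "card U = k" "finite U"
      using k_subsetsD[OF _ assms(1)] by blast+
    have "sum F (permutations_of_set U) = (\<Sum>xs\<in>permutations_of_set U. G U)"
      by (rule sum.cong) (use U in \<open>auto simp: permutations_of_set_def distinct_card intro!: assms(2)\<close>)
    then show "sum F (permutations_of_set U) = fact k *\<^sub>R G U"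
      using U by (simp add: sum_constant_scaleR)
  qed
  finally show ?thesis .
qed

lemma list_Un_subset_eq_iff:
  assumes "finite A" "xs \<in> k_lists A k" "V \<in> k_subsets A m" "k + m = card A"
  shows "set xs \<union> V = A \<longleftrightarrow> V = A - set xs \<and> distinct xs"
proof
  assume cover: "set xs \<union> V = A"
  have xs: "set xs \<subseteq> A" "length xs = k" and V: "V \<subseteq> A" "card V = m" "finite V"
    using assms(2) k_subsetsD[OF assms(3,1)] by (auto simp: k_lists_def)
  have "card A \<le> card (set xs) + m"
    using card_Un_le[of "set xs" V] cover V by simp
  then have "distinct xs"
    using card_length[of xs] card_distinct[of xs] xs assms(4) by simp
  have "card (A - set xs) = m"
    using xs assms(1,4) \<open>distinct xs\<close> by (simp add: card_Diff_subset distinct_card)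
  moreover have "A - set xs \<subseteq> V" using cover by auto
  ultimately have "A - set xs = V" using card_subset_eq[OF V(3)] V by simp
  with \<open>distinct xs\<close> show "V = A - set xs \<and> distinct xs" by simp
next
  assume "V = A - set xs \<and> distinct xs"
  then show "set xs \<union> V = A" using assms(2) by (auto simp: k_lists_def)
qed

lemma orthogonal_to_orthogonal_basis_eq_0:
  fixes S :: "'a::euclidean_space set"
  assumes "pairwise orthogonal S" "0 \<notin> S" "card S = DIM('a)" "\<forall>u\<in>S. orthogonal w u"
  shows "w = 0"
proof (rule ccontr)
  assume "w \<noteq> 0"
  with assms(4) have "w \<notin> S" by (auto simp: orthogonal_def)
  have "pairwise orthogonal (insert w S)"
    using assms(1,4) by (auto simp: pairwise_insert orthogonal_commute)
  with \<open>w \<noteq> 0\<close> assms(2) have "independent (insert w S)"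
    by (intro pairwise_orthogonal_independent) auto
  then have "card (insert w S) \<le> DIM('a)" by (simp add: independent_bound)
  moreover have "finite S"
    using assms(3) DIM_positive[where 'a = 'a] by (auto intro: card_ge_0_finite)
  ultimately show False using \<open>w \<notin> S\<close> assms(3) by simp
qed

lemma matrix_mul_lneg: "(- A) ** B = - (A ** (B :: 'a::ring_1^_^_))"
  by (simp add: matrix_matrix_mult_def vec_eq_iff sum_negf)

lemma matrix_mul_sum_right: "A ** (\<Sum>i\<in>S. f i) = (\<Sum>i\<in>S. A ** (f i :: 'a::semiring_1^_^_))"
  by (induction S rule: infinite_finite_induct) (auto simp: matrix_add_ldistrib)

lemma matrix_mul_scaleR_right: "(A::real^'n^'m) ** (k *\<^sub>R B) = k *\<^sub>R (A ** B)"
  by (simp add: matrix_scalar_ac scalar_matrix_assoc)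

lemma matrix_vector_mult_sum_left: "(\<Sum>i\<in>S. f i) *v x = (\<Sum>i\<in>S. f i *v (x :: 'a::semiring_1^_))"
  by (induction S rule: infinite_finite_induct) (auto simp: matrix_vector_mult_add_rdistrib)

lemma matrix_vector_mult_scaleR_left: "(c *\<^sub>R (A::real^'n^'m)) *v x = c *\<^sub>R (A *v x)"
  by (simp add: scaleR_matrix_vector_assoc)

lemma matrix_vector_mult_neg_left: "(- A) *v x = - (A *v (x :: 'a::ring_1^_))"
  by (simp add: matrix_vector_mult_def vec_eq_iff sum_negf)

lemma mat_1_neq_0: "(mat 1 :: real^'n^'n) \<noteq> 0"
proof
  assume "(mat 1 :: real^'n^'n) = 0"
  then have "(mat 1 :: real^'n^'n) $ i $ i = 0" for i by simp
  then show False by (simp add: mat_def)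
qed

lemma gprod_Nil [simp]: "gprod gamma [] = mat 1"
  by (simp add: gprod_def)

lemma gprod_Cons [simp]: "gprod gamma (a # l) = gamma a ** gprod gamma l"
  by (simp add: gprod_def)

lemma gprod_append: "gprod gamma (xs @ ys) = gprod gamma xs ** gprod gamma ys"
  by (induction xs) (auto simp: matrix_mul_assoc)

locale clifford_generators =
  fixes gamma :: "nat \<Rightarrow> real^8^8" and n :: nat
  assumes clifford: "\<forall>i<n. \<forall>j<n. gamma i ** gamma j + gamma j ** gamma i
                       = (if i = j then -2 else 0) *\<^sub>R mat 1"
begin

lemma gamma_square:
  assumes "i < n"
  shows "gamma i ** gamma i = - mat 1"
proof -
  have "2 *\<^sub>R (gamma i ** gamma i) = (-2) *\<^sub>R mat 1"
    using clifford assms by (simp add: scaleR_2)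
  then have "(1/2::real) *\<^sub>R 2 *\<^sub>R (gamma i ** gamma i) = (1/2::real) *\<^sub>R (-2) *\<^sub>R mat 1"
    by simp
  then show ?thesis by simp
qed

lemma gamma_anticomm: "i < n \<Longrightarrow> j < n \<Longrightarrow> i \<noteq> j \<Longrightarrow> gamma i ** gamma j = - (gamma j ** gamma i)"
  using clifford by (auto simp: eq_neg_iff_add_eq_0)

lemma gamma_square_left: "i < n \<Longrightarrow> gamma i ** (gamma i ** A) = - A"
  by (simp add: matrix_mul_assoc gamma_square matrix_mul_lneg)

lemma gamma_square_vec: "i < n \<Longrightarrow> gamma i *v (gamma i *v v) = - v"
  by (simp add: matrix_vector_mul_assoc gamma_square matrix_vector_mult_neg_left)

lemma gamma_anticomm_vec:
  "i < n \<Longrightarrow> j < n \<Longrightarrow> i \<noteq> j \<Longrightarrow> gamma i *v (gamma j *v v) = - (gamma j *v (gamma i *v v))"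
  by (simp add: matrix_vector_mul_assoc gamma_anticomm[of i j] matrix_vector_mult_neg_left)

lemma gprod_insort:
  "b < n \<Longrightarrow> set ys \<subseteq> {..<n} \<Longrightarrow> b \<notin> set ys \<Longrightarrow>
   gamma b ** gprod gamma ys = insort_sign b ys *\<^sub>R gprod gamma (insort b ys)"
proof (induction ys)
  case (Cons y ys)
  show ?case
  proof (cases "b \<le> y")
    case False
    have "gamma b ** gprod gamma (y # ys) = - (gamma y ** (gamma b ** gprod gamma ys))"
      using Cons.prems False
      by (simp add: matrix_mul_assoc gamma_anticomm[of b y] matrix_mul_lneg)
    also have "\<dots> = - (insort_sign b ys *\<^sub>R (gamma y ** gprod gamma (insort b ys)))"
      using Cons by (simp add: matrix_mul_scaleR_right)
    finally show ?thesis
      using False by (simp add: insort_sign_def)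
  qed (simp add: insort_sign_def)
qed (simp add: insort_sign_def)

lemma gprod_sort:
  "distinct xs \<Longrightarrow> set xs \<subseteq> {..<n} \<Longrightarrow> gprod gamma xs = inversion_sign xs *\<^sub>R gprod gamma (sort xs)"
proof (induction xs)
  case (Cons a l)
  have "gprod gamma (a # l) = inversion_sign l *\<^sub>R (gamma a ** gprod gamma (sort l))"
    using Cons by (simp add: matrix_mul_scaleR_right)
  also have "gamma a ** gprod gamma (sort l) = insort_sign a (sort l) *\<^sub>R gprod gamma (insort a (sort l))"
    using Cons.prems by (intro gprod_insort) auto
  finally show ?case
    using Cons.prems by (simp add: inversion_sign_Cons_distinct)
qed simp

lemma gprod3_square:
  assumes "distinct [a, b, c]" "a < n" "b < n" "c < n"
  shows "gprod gamma [a, b, c] ** gprod gamma [a, b, c] = mat 1"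
proof -
  have "(gprod gamma [a, b, c] ** gprod gamma [a, b, c]) *v x = x" for x
  proof -
    have "(gprod gamma [a, b, c] ** gprod gamma [a, b, c]) *v x
        = gamma a *v (gamma b *v (gamma c *v (gamma a *v (gamma b *v (gamma c *v x)))))"
      by (simp add: matrix_vector_mul_assoc[symmetric])
    also have "\<dots> = x"
      using assms gamma_anticomm_vec[of c a] gamma_anticomm_vec[of b a] gamma_anticomm_vec[of c b]
        gamma_square_vec[of a] gamma_square_vec[of b] gamma_square_vec[of c]
      by (simp add: vec.neg)
    finally show ?thesis .
  qed
  then show ?thesis by (simp add: matrix_eq)
qed

end

lemma levi_not_distinct:
  assumes "\<not> distinct xs"
  shows "levi xs = 0"
proof -
  have "\<not> (length xs = 7 \<and> set xs = {..<7})"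
  proof
    assume "length xs = 7 \<and> set xs = {..<7}"
    then have "card (set xs) = length xs" by simp
    with assms show False using card_distinct by blast
  qed
  then show ?thesis unfolding levi_eq_inversion_sign by (rule if_not_P)
qed

lemma hodge3_Cons_member: "b \<in> set ys \<Longrightarrow> hodge3 \<alpha> (b # ys) = 0"
  by (simp add: hodge3_def levi_not_distinct)

definition restricted_form_act ::
    "(nat \<Rightarrow> real^8^8) \<Rightarrow> nat \<Rightarrow> (nat set \<Rightarrow> bool) \<Rightarrow> (nat list \<Rightarrow> real) \<Rightarrow> real^8^8" where
  "restricted_form_act gamma k P \<alpha> =
     (\<Sum>J\<in>k_subsets {..<7} k.
        if P J then \<alpha> (sorted_list_of_set J) *\<^sub>R gprod gamma (sorted_list_of_set J) else 0)"

lemma form_act_eq_restricted: "form_act gamma k \<alpha> = restricted_form_act gamma k (\<lambda>_. True) \<alpha>"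
  by (simp add: form_act_def restricted_form_act_def k_subsets_def)

lemma restricted_form_act_cong:
  "(\<And>J. J \<in> k_subsets {..<7} k \<Longrightarrow> P J = P' J) \<Longrightarrow>
   restricted_form_act gamma k P \<alpha> = restricted_form_act gamma k P' \<alpha>"
  unfolding restricted_form_act_def by (rule sum.cong) auto

lemma restricted_form_act_compl:
  "restricted_form_act gamma k (\<lambda>J. \<not> P J) \<alpha> = form_act gamma k \<alpha> - restricted_form_act gamma k P \<alpha>"
  unfolding form_act_eq_restricted restricted_form_act_def eq_diff_eq sum.distrib[symmetric]
  by (rule sum.cong) auto

lemma sum_restricted_form_act_member:
  "(\<Sum>b<(7::nat). restricted_form_act gamma k (\<lambda>J. b \<in> J) \<alpha>) = real k *\<^sub>R form_act gamma k \<alpha>"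
proof -
  have "(\<Sum>b<7. restricted_form_act gamma k (\<lambda>J. b \<in> J) \<alpha>)
      = (\<Sum>J\<in>k_subsets {..<7} k. \<Sum>b<7.
          if b \<in> J then \<alpha> (sorted_list_of_set J) *\<^sub>R gprod gamma (sorted_list_of_set J) else 0)"
    unfolding restricted_form_act_def by (rule sum.swap)
  also have "\<dots> = (\<Sum>J\<in>k_subsets {..<7} k.
      real k *\<^sub>R (\<alpha> (sorted_list_of_set J) *\<^sub>R gprod gamma (sorted_list_of_set J)))"
  proof (rule sum.cong[OF refl])
    fix J :: "nat set" assume "J \<in> k_subsets {..<7} k"
    then have "{..<7} \<inter> J = J" "card J = k" by (auto simp: k_subsets_def)
    then show "(\<Sum>b<(7::nat).
          if b \<in> J then \<alpha> (sorted_list_of_set J) *\<^sub>R gprod gamma (sorted_list_of_set J) else 0)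
        = real k *\<^sub>R (\<alpha> (sorted_list_of_set J) *\<^sub>R gprod gamma (sorted_list_of_set J))"
      by (simp add: sum_constant_scaleR del: sum_constant flip: sum.inter_restrict)
  qed
  also have "\<dots> = real k *\<^sub>R form_act gamma k \<alpha>"
    by (simp add: form_act_def k_subsets_def scaleR_right.sum)
  finally show ?thesis .
qed

lemma form_act_contr:
  "form_act gamma k (contr X \<alpha>) = (\<Sum>b<7. coord7 X b *\<^sub>R form_act gamma k (\<lambda>l. \<alpha> (b # l)))"
  unfolding form_act_def contr_def scaleR_sum_left
  by (subst sum.swap) (simp add: scaleR_right.sum)

locale clifford7 = clifford_generators gamma 7 for gamma +
  assumes orientation: "gprod gamma [0..<7] = mat 1"
begin

lemma levi_scaleR_mat_1:
  "levi xs *\<^sub>R mat 1 = (if length xs = 7 \<and> set xs = {..<7} then gprod gamma xs else 0)"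
proof (cases "length xs = 7 \<and> set xs = {..<7}")
  case True
  then have "distinct xs" by (metis card_distinct card_lessThan)
  moreover have "sort xs = sorted_list_of_set (set xs)"
    using \<open>distinct xs\<close> by (simp add: sorted_list_of_set_sort_remdups distinct_remdups_id)
  with True have "sort xs = [0..<7]" by (simp add: lessThan_atLeast0)
  ultimately show ?thesis
    using True gprod_sort[of xs] orientation by (simp add: levi_eq_inversion_sign)
qed (auto simp: levi_eq_inversion_sign)

lemma levi_insort:
  assumes "b < 7" "set ys \<subseteq> {..<7}" "b \<notin> set ys"
  shows "levi (A @ b # ys) = insort_sign b ys * levi (A @ insort b ys)"
proof -
  have "gprod gamma (A @ b # ys) = insort_sign b ys *\<^sub>R gprod gamma (A @ insort b ys)"
    using gprod_insort[OF assms] by (simp add: gprod_append matrix_mul_scaleR_right)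
  then have "levi (A @ b # ys) *\<^sub>R mat 1
      = (insort_sign b ys * levi (A @ insort b ys)) *\<^sub>R (mat 1 :: real^8^8)"
    unfolding levi_scaleR_mat_1 scaleR_scaleR[symmetric] by (simp add: length_insort set_insort_key)
  then show ?thesis by (simp add: mat_1_neq_0)
qed

lemma hodge3_Cons_insort:
  assumes "b < 7" "set ys \<subseteq> {..<7}" "b \<notin> set ys"
  shows "hodge3 \<alpha> (b # ys) = insort_sign b ys * hodge3 \<alpha> (insort b ys)"
  unfolding hodge3_def levi_insort[OF assms] sum_distrib_left
  by (simp add: algebra_simps)

lemma form_act_Cons:
  assumes b: "b < 7"
    and vanish: "\<And>T. T \<in> k_subsets {..<7} k \<Longrightarrow> b \<in> T \<Longrightarrow> \<alpha> (b # sorted_list_of_set T) = 0"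
    and alternate: "\<And>T. T \<in> k_subsets {..<7} k \<Longrightarrow> b \<notin> T \<Longrightarrow>
      \<alpha> (b # sorted_list_of_set T)
        = insort_sign b (sorted_list_of_set T) * \<alpha> (insort b (sorted_list_of_set T))"
  shows "form_act gamma k (\<lambda>l. \<alpha> (b # l)) = - (gamma b ** restricted_form_act gamma (Suc k) (\<lambda>J. b \<in> J) \<alpha>)"
proof -
  let ?f = "\<lambda>J. \<alpha> (sorted_list_of_set J) *\<^sub>R gprod gamma (sorted_list_of_set J)"
  have summand: "\<alpha> (b # sorted_list_of_set T) *\<^sub>R gprod gamma (sorted_list_of_set T)
      = (if b \<notin> T then - (gamma b ** ?f (insert b T)) else 0)"
    if T: "T \<in> k_subsets {..<7} k" for T
  proof (cases "b \<in> T")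
    case False
    let ?l = "sorted_list_of_set T"
    have T7: "T \<subseteq> {..<7}" "finite T" using k_subsetsD[OF T] by auto
    have "gprod gamma ?l = - (gamma b ** (gamma b ** gprod gamma ?l))"
      by (simp add: gamma_square_left[OF b])
    also have "\<dots> = - (insort_sign b ?l *\<^sub>R (gamma b ** gprod gamma (insort b ?l)))"
      using gprod_insort[of b ?l] b T7 False by (simp add: matrix_mul_scaleR_right)
    finally have "\<alpha> (b # ?l) *\<^sub>R gprod gamma ?l
        = - ((insort_sign b ?l * insort_sign b ?l) * \<alpha> (insort b ?l))
            *\<^sub>R (gamma b ** gprod gamma (insort b ?l))"
      using alternate[OF T False] by (simp add: algebra_simps)
    then show ?thesis
      using False T7 by (simp add: insort_sign_square matrix_mul_scaleR_right sorted_list_of_set_insert)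
  qed (use vanish[OF T] in simp)
  have "form_act gamma k (\<lambda>l. \<alpha> (b # l))
      = (\<Sum>T\<in>k_subsets {..<7} k. if b \<notin> T then - (gamma b ** ?f (insert b T)) else 0)"
    unfolding form_act_def k_subsets_def[symmetric] by (rule sum.cong[OF refl]) (rule summand)
  also have "\<dots> = - (gamma b ** (\<Sum>T\<in>{T \<in> k_subsets {..<7} k. b \<notin> T}. ?f (insert b T)))"
    by (simp add: sum.inter_filter[symmetric] sum_negf matrix_mul_sum_right)
  also have "(\<Sum>T\<in>{T \<in> k_subsets {..<7} k. b \<notin> T}. ?f (insert b T))
      = restricted_form_act gamma (Suc k) (\<lambda>J. b \<in> J) \<alpha>"
    using sum_k_subsets_Suc_member[where f = ?f and k = k] b
    by (simp add: restricted_form_act_def sum.inter_filter)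
  finally show ?thesis .
qed

lemma wedge1_term:
  assumes W: "W \<in> k_subsets {..<7} (Suc k)" and s: "s < Suc k"
  defines "l \<equiv> sorted_list_of_set W"
  shows "((-1) ^ s * coord7 X (l ! s) * \<beta> (take s l @ drop (Suc s) l)) *\<^sub>R gprod gamma l
       = coord7 X (l ! s) *\<^sub>R (gamma (l ! s) **
           (\<beta> (sorted_list_of_set (W - {l ! s})) *\<^sub>R gprod gamma (sorted_list_of_set (W - {l ! s}))))"
proof -
  define b where "b = l ! s"
  define V where "V = W - {b}"
  have fin: "finite W" "W \<subseteq> {..<7}" "length l = Suc k"
    using k_subsetsD[OF W] by (auto simp: l_def)
  have bW: "b \<in> W" using nth_mem[of s l] s fin by (simp add: b_def l_def)
  have bV: "b \<notin> set (sorted_list_of_set V)" using fin by (simp add: V_def)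
  have split: "l = takeWhile (\<lambda>y. y < b) (sorted_list_of_set V)
      @ b # dropWhile (\<lambda>y. y < b) (sorted_list_of_set V)"
    using sorted_list_of_set_insert_remove[OF fin(1), of b] bW insort_eq_takeWhile_dropWhile[OF bV]
    by (simp add: V_def insert_absorb l_def)
  define t where "t = length (takeWhile (\<lambda>y. y < b) (sorted_list_of_set V))"
  have "t < length l" "l ! t = b" using split by (simp_all add: t_def nth_append)
  then have st: "s = t"
    using nth_eq_iff_index_eq[of l s t] s fin by (simp add: b_def l_def)
  have "take s l @ drop (Suc s) l = sorted_list_of_set V"
    using split st by (simp add: t_def takeWhile_dropWhile_id)
  moreover have "gamma b ** gprod gamma (sorted_list_of_set V) = (-1) ^ s *\<^sub>R gprod gamma l"
    using gprod_insort[of b "sorted_list_of_set V"] bW bV fin split st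
    by (auto simp: insort_sign_def t_def V_def insort_eq_takeWhile_dropWhile)
  ultimately show ?thesis
    unfolding b_def[symmetric] V_def[symmetric] by (simp add: matrix_mul_scaleR_right)
qed

lemma wedge1_scaleR_gprod:
  assumes W: "W \<in> k_subsets {..<7} (Suc k)"
  shows "wedge1 X \<beta> (sorted_list_of_set W) *\<^sub>R gprod gamma (sorted_list_of_set W)
       = (\<Sum>b\<in>W. coord7 X b *\<^sub>R (gamma b **
           (\<beta> (sorted_list_of_set (W - {b})) *\<^sub>R gprod gamma (sorted_list_of_set (W - {b})))))"
proof -
  let ?l = "sorted_list_of_set W"
  have fin: "finite W" "length ?l = Suc k" using k_subsetsD[OF W] by auto
  let ?h = "\<lambda>b. coord7 X b *\<^sub>R (gamma b **
           (\<beta> (sorted_list_of_set (W - {b})) *\<^sub>R gprod gamma (sorted_list_of_set (W - {b}))))"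
  have "wedge1 X \<beta> ?l *\<^sub>R gprod gamma ?l = (\<Sum>s<length ?l. ?h (?l ! s))"
    unfolding wedge1_def scaleR_sum_left
    by (rule sum.cong[OF refl]) (use W fin in \<open>simp add: wedge1_term\<close>)
  also have "\<dots> = sum ?h W"
    using sum.reindex_bij_betw[OF bij_betw_nth[of ?l "{..<length ?l}" "set ?l"], of ?h] fin
    by simp
  finally show ?thesis .
qed

lemma form_act_wedge1:
  "form_act gamma (Suc k) (wedge1 X \<beta>)
     = (\<Sum>b<7. coord7 X b *\<^sub>R (gamma b ** restricted_form_act gamma k (\<lambda>V. b \<notin> V) \<beta>))"
proof -
  define h where "h W b = coord7 X b *\<^sub>R (gamma b **
           (\<beta> (sorted_list_of_set (W - {b})) *\<^sub>R gprod gamma (sorted_list_of_set (W - {b}))))" for W b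
  have "form_act gamma (Suc k) (wedge1 X \<beta>) = (\<Sum>W\<in>k_subsets {..<7} (Suc k). \<Sum>b<7. if b \<in> W then h W b else 0)"
    unfolding form_act_def k_subsets_def[symmetric]
  proof (rule sum.cong[OF refl])
    fix W :: "nat set" assume W: "W \<in> k_subsets {..<7} (Suc k)"
    then have "{..<7} \<inter> W = W" by (auto simp: k_subsets_def)
    then show "wedge1 X \<beta> (sorted_list_of_set W) *\<^sub>R gprod gamma (sorted_list_of_set W)
        = (\<Sum>b<7. if b \<in> W then h W b else 0)"
      by (simp add: wedge1_scaleR_gprod[OF W] h_def flip: sum.inter_restrict)
  qed
  also have "\<dots> = (\<Sum>b<7. \<Sum>W\<in>{W \<in> k_subsets {..<7} (Suc k). b \<in> W}. h W b)"
    by (subst sum.swap) (simp add: sum.inter_filter)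
  also have "\<dots> = (\<Sum>b<7. \<Sum>T\<in>{T \<in> k_subsets {..<7} k. b \<notin> T}. h (insert b T) b)"
    by (rule sum.cong[OF refl]) (simp add: sum_k_subsets_Suc_member)
  also have "\<dots> = (\<Sum>b<7. coord7 X b *\<^sub>R (gamma b ** restricted_form_act gamma k (\<lambda>V. b \<notin> V) \<beta>))"
    by (rule sum.cong[OF refl])
       (simp add: h_def restricted_form_act_def sum.inter_filter[symmetric] scaleR_right.sum
          matrix_mul_sum_right)
  finally show ?thesis .
qed


lemma levi_append_scaleR_gprod:
  assumes xs: "xs \<in> k_lists {..<7} 3" and V: "V \<in> k_subsets {..<7} 4"
  defines "l \<equiv> sorted_list_of_set V"
  shows "levi (xs @ l) *\<^sub>R gprod gamma l = (if V = {..<7} - set xs \<and> distinct xs then gprod gamma xs else 0)"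
proof -
  have cover_iff: "set (xs @ l) = {..<7} \<longleftrightarrow> V = {..<7} - set xs \<and> distinct xs"
    using list_Un_subset_eq_iff[OF _ xs V] k_subsetsD[OF V] by (simp add: l_def)
  have len: "length (xs @ l) = 7"
    using xs k_subsetsD[OF V] by (simp add: k_lists_def l_def)
  show ?thesis
  proof (cases "V = {..<7} - set xs \<and> distinct xs")
    case True
    then obtain a b c where abc: "xs = [a, b, c]" "distinct [a, b, c]" "a < 7" "b < 7" "c < 7"
      using xs by (auto simp: k_lists_def numeral_3_eq_3 length_Suc_conv)
    have "distinct (xs @ l)"
      using True cover_iff len by (metis card_distinct card_lessThan)
    then have sign_sq: "levi (xs @ l) * levi (xs @ l) = 1"
      using True cover_iff len by (simp add: levi_eq_inversion_sign inversion_sign_square)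
    have "levi (xs @ l) *\<^sub>R mat 1 = gprod gamma xs ** gprod gamma l"
      using levi_scaleR_mat_1[of "xs @ l"] len True cover_iff by (simp add: gprod_append)
    then have "gprod gamma l = levi (xs @ l) *\<^sub>R gprod gamma xs"
      using gprod3_square[of a b c] abc
      by (metis matrix_mul_assoc matrix_mul_lid matrix_mul_scaleR_right matrix_mul_rid)
    with True sign_sq show ?thesis by simp
  next
    case False
    have "\<not> (length (xs @ l) = 7 \<and> set (xs @ l) = {..<7})"
    proof
      assume "length (xs @ l) = 7 \<and> set (xs @ l) = {..<7}"
      then have "V = {..<7} - set xs \<and> distinct xs" using cover_iff by (simp only:)
      with False show False by (rule notE)
    qed
    then have "levi (xs @ l) = 0"
      unfolding levi_eq_inversion_sign by (rule if_not_P)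
    with False show ?thesis by (simp only: if_not_P[OF False] scale_zero_left if_False)
  qed
qed

lemma sum_levi_append_scaleR_gprod:
  assumes xs: "xs \<in> k_lists {..<7} 3"
  shows "(\<Sum>V\<in>k_subsets {..<7} 4.
            if Q V then levi (xs @ sorted_list_of_set V) *\<^sub>R gprod gamma (sorted_list_of_set V) else 0)
       = (if distinct xs \<and> Q ({..<7} - set xs) then gprod gamma xs else 0)"
proof -
  have "(\<Sum>V\<in>k_subsets {..<7} 4.
          if Q V then levi (xs @ sorted_list_of_set V) *\<^sub>R gprod gamma (sorted_list_of_set V) else 0)
      = (\<Sum>V\<in>k_subsets {..<7} 4.
          if {..<7} - set xs = V then (if Q V \<and> distinct xs then gprod gamma xs else 0) else 0)"
    by (rule sum.cong[OF refl]) (auto simp: levi_append_scaleR_gprod[OF xs])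
  also have "\<dots> = (if {..<7} - set xs \<in> k_subsets {..<7} 4
      then (if Q ({..<7} - set xs) \<and> distinct xs then gprod gamma xs else 0) else 0)"
    by (simp add: sum.delta')
  also have "\<dots> = (if distinct xs \<and> Q ({..<7} - set xs) then gprod gamma xs else 0)"
    using xs by (auto simp: k_lists_def k_subsets_def card_Diff_subset distinct_card)
  finally show ?thesis .
qed

lemma restricted_form_act_hodge3:
  assumes alternating: "\<And>xs. distinct xs \<Longrightarrow> set xs \<subseteq> {..<7} \<Longrightarrow> \<alpha> xs = inversion_sign xs * \<alpha> (sort xs)"
  shows "restricted_form_act gamma 4 Q (hodge3 \<alpha>) = restricted_form_act gamma 3 (\<lambda>U. Q ({..<7} - U)) \<alpha>"
proof -
  let ?g = "\<lambda>xs V. if Q V then levi (xs @ sorted_list_of_set V) *\<^sub>R gprod gamma (sorted_list_of_set V) else 0"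
  have "restricted_form_act gamma 4 Q (hodge3 \<alpha>)
      = (1/6) *\<^sub>R (\<Sum>V\<in>k_subsets {..<7} 4. \<Sum>xs\<in>k_lists {..<7} 3. \<alpha> xs *\<^sub>R ?g xs V)"
    unfolding restricted_form_act_def hodge3_def sum_k_lists_3 scaleR_right.sum
    by (rule sum.cong[OF refl]) (simp add: sum_divide_distrib scaleR_sum_left)
  also have "\<dots> = (1/6) *\<^sub>R (\<Sum>xs\<in>k_lists {..<7} 3. \<alpha> xs *\<^sub>R (\<Sum>V\<in>k_subsets {..<7} 4. ?g xs V))"
    by (subst sum.swap) (simp only: scaleR_right.sum)
  also have "\<dots> = (1/6) *\<^sub>R (\<Sum>xs\<in>k_lists {..<7} 3.
      \<alpha> xs *\<^sub>R (if distinct xs \<and> Q ({..<7} - set xs) then gprod gamma xs else 0))"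
    by (simp add: sum_levi_append_scaleR_gprod)
  also have "\<dots> = (1/6) *\<^sub>R (\<Sum>xs\<in>k_lists {..<7} 3.
      if distinct xs \<and> Q ({..<7} - set xs) then \<alpha> xs *\<^sub>R gprod gamma xs else 0)"
    by (simp add: if_distrib cong: if_cong)
  also have "(\<Sum>xs\<in>k_lists {..<7} 3. if distinct xs \<and> Q ({..<7} - set xs) then \<alpha> xs *\<^sub>R gprod gamma xs else 0)
      = (\<Sum>U\<in>{U \<in> k_subsets {..<7} 3. Q ({..<7} - U)}.
           fact 3 *\<^sub>R (\<alpha> (sorted_list_of_set U) *\<^sub>R gprod gamma (sorted_list_of_set U)))"
  proof (rule sum_distinct_k_lists)
    fix xs :: "nat list" assume xs: "distinct xs" "set xs \<subseteq> {..<7}"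
    then have "\<alpha> xs *\<^sub>R gprod gamma xs
        = (inversion_sign xs * inversion_sign xs) *\<^sub>R (\<alpha> (sort xs) *\<^sub>R gprod gamma (sort xs))"
      using alternating[OF xs] gprod_sort[OF xs] by (simp add: algebra_simps)
    with xs show "\<alpha> xs *\<^sub>R gprod gamma xs
        = \<alpha> (sorted_list_of_set (set xs)) *\<^sub>R gprod gamma (sorted_list_of_set (set xs))"
      by (simp add: inversion_sign_square sorted_list_of_set_sort_remdups distinct_remdups_id)
  qed simp
  also have "(1/6::real) *\<^sub>R (\<Sum>U\<in>{U \<in> k_subsets {..<7} 3. Q ({..<7} - U)}.
           fact 3 *\<^sub>R (\<alpha> (sorted_list_of_set U) *\<^sub>R gprod gamma (sorted_list_of_set U)))
      = (\<Sum>U\<in>{U \<in> k_subsets {..<7} 3. Q ({..<7} - U)}.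
           \<alpha> (sorted_list_of_set U) *\<^sub>R gprod gamma (sorted_list_of_set U))"
    by (simp add: scaleR_right.sum fact_numeral)
  finally show ?thesis
    by (simp add: restricted_form_act_def sum.inter_filter)
qed

end

locale spinor7 = clifford7 +
  fixes Psi :: "real^8"
  assumes skew: "\<forall>i<7. transpose (gamma i) = - gamma i"
    and unit: "norm Psi = 1"
begin

abbreviation \<omega> :: "nat list \<Rightarrow> real" where "\<omega> \<equiv> omega3 gamma Psi"

lemma gamma_skew_inner: "i < 7 \<Longrightarrow> (gamma i *v v) \<bullet> w = - (v \<bullet> (gamma i *v w))"
proof -
  assume "i < 7"
  have "v \<bullet> (gamma i *v w) = (transpose (gamma i) *v v) \<bullet> w"
    by (simp add: dot_lmul_matrix)
  with skew \<open>i < 7\<close> show ?thesis by (simp add: matrix_vector_mult_neg_left)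
qed

lemma gamma_inner_self: "i < 7 \<Longrightarrow> (gamma i *v v) \<bullet> v = 0"
  using gamma_skew_inner[of i v v] by (simp add: inner_commute)

lemma gamma_gamma_inner_self:
  assumes "i < 7" "j < 7" "i \<noteq> j"
  shows "(gamma i *v (gamma j *v v)) \<bullet> v = 0"
proof -
  have "(gamma i *v (gamma j *v v)) \<bullet> v = - ((gamma j *v v) \<bullet> (gamma i *v v))"
    using gamma_skew_inner[of i] assms by simp
  moreover have "(gamma i *v (gamma j *v v)) \<bullet> v = (gamma i *v v) \<bullet> (gamma j *v v)"
    using gamma_anticomm_vec[OF assms] gamma_skew_inner[of j] assms by simp
  ultimately show ?thesis by (simp add: inner_commute)
qed

lemma Psi_inner_Psi: "Psi \<bullet> Psi = 1"
  using unit by (simp add: norm_eq_1)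

lemma gamma_Psi_inner: "i < 7 \<Longrightarrow> j < 7 \<Longrightarrow> (gamma i *v Psi) \<bullet> (gamma j *v Psi) = (if i = j then 1 else 0)"
  using gamma_skew_inner[of i Psi "gamma j *v Psi"] gamma_square_vec[of i Psi]
    gamma_gamma_inner_self[of i j Psi] Psi_inner_Psi
  by (auto simp: inner_commute)

lemma orthonormal_spinor_frame:
  defines "S \<equiv> insert Psi ((\<lambda>i. gamma i *v Psi) ` {..<7})"
  shows "pairwise orthogonal S" "0 \<notin> S" "card S = DIM(real^8)"
proof -
  have "inj_on (\<lambda>i. gamma i *v Psi) {..<7}"
    by (rule inj_onI) (metis gamma_Psi_inner lessThan_iff zero_neq_one)
  moreover have "Psi \<notin> (\<lambda>i. gamma i *v Psi) ` {..<7}"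
    using gamma_inner_self[of _ Psi] Psi_inner_Psi by force
  ultimately show "card S = DIM(real^8)"
    by (simp add: S_def card_image)
  show "pairwise orthogonal S"
    using gamma_inner_self gamma_Psi_inner
    by (auto simp: S_def pairwise_def orthogonal_def inner_commute)
  show "0 \<notin> S"
    using Psi_inner_Psi gamma_Psi_inner by (force simp: S_def)
qed

lemma spinor_expansion: "v = (v \<bullet> Psi) *\<^sub>R Psi + (\<Sum>k<7. (v \<bullet> (gamma k *v Psi)) *\<^sub>R (gamma k *v Psi))"
proof -
  define w where "w = v - ((v \<bullet> Psi) *\<^sub>R Psi + (\<Sum>k<7. (v \<bullet> (gamma k *v Psi)) *\<^sub>R (gamma k *v Psi)))"
  have "w \<bullet> Psi = 0"
    by (simp add: w_def inner_diff_left inner_add_left inner_sum_left gamma_inner_self Psi_inner_Psi)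
  moreover have "w \<bullet> (gamma j *v Psi) = 0" if "j < 7" for j
  proof -
    have "(\<Sum>k<7. (v \<bullet> (gamma k *v Psi)) *\<^sub>R (gamma k *v Psi)) \<bullet> (gamma j *v Psi) = v \<bullet> (gamma j *v Psi)"
      using that by (simp add: inner_sum_left gamma_Psi_inner if_distrib cong: if_cong)
    then show ?thesis
      using gamma_inner_self[OF that, of Psi]
      by (simp add: w_def inner_diff_left inner_add_left inner_commute[of Psi])
  qed
  ultimately have "w = 0"
    using orthogonal_to_orthogonal_basis_eq_0[OF orthonormal_spinor_frame]
    by (auto simp: orthogonal_def)
  then show ?thesis by (simp add: w_def)
qed

lemma omega3_triple: "\<omega> [a, b, c] = - ((gamma a *v (gamma b *v (gamma c *v Psi))) \<bullet> Psi)"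
  by (simp add: omega3_def matrix_vector_mul_assoc)

lemma gamma_gamma_Psi_expansion:
  assumes bj: "b < 7" "j < 7" "b \<noteq> j"
  shows "gamma b *v (gamma j *v Psi) = (\<Sum>k<7. \<omega> [b, j, k] *\<^sub>R (gamma k *v Psi))"
proof -
  let ?v = "gamma b *v (gamma j *v Psi)"
  have "?v \<bullet> (gamma k *v Psi) = \<omega> [b, j, k]" if k: "k < 7" for k
  proof -
    have "?v \<bullet> (gamma k *v Psi) = - ((gamma k *v Psi) \<bullet> (gamma j *v (gamma b *v Psi)))"
      using gamma_anticomm_vec[OF bj] by (simp add: inner_commute)
    also have "\<dots> = (gamma j *v (gamma k *v Psi)) \<bullet> (gamma b *v Psi)"
      using gamma_skew_inner[of j] bj by simp
    also have "\<dots> = \<omega> [b, j, k]"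
      using gamma_skew_inner[of b "gamma j *v (gamma k *v Psi)" Psi] bj
      by (simp add: omega3_triple inner_commute)
    finally show ?thesis .
  qed
  then show ?thesis
    using spinor_expansion[of ?v] gamma_gamma_inner_self[OF bj] by simp
qed

lemma omega3_not_distinct:
  assumes "x < 7" "y < 7" "z < 7" "\<not> distinct [x, y, z]"
  shows "\<omega> [x, y, z] = 0"
proof -
  obtain w c where "w < 7" "gamma x *v (gamma y *v (gamma z *v Psi)) = c *\<^sub>R (gamma w *v Psi)"
  proof (cases "x = y")
    case True
    then show ?thesis using that[of z "-1"] assms gamma_square_vec[of x] by simp
  next
    case False
    show ?thesis
    proof (cases "y = z")
      case True
      then show ?thesis using that[of x "-1"] assms gamma_square_vec[of y] by (simp add: vec.neg)
    next
      case False
      with \<open>x \<noteq> y\<close> assms have "x = z" by auto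
      then show ?thesis
        using that[of y 1] assms \<open>x \<noteq> y\<close> gamma_anticomm_vec[of y x] gamma_square_vec[of x]
        by (simp add: vec.neg)
    qed
  qed
  then show ?thesis by (simp add: omega3_triple gamma_inner_self)
qed

lemma sum_omega3_gamma_gamma_Psi:
  assumes b: "b < 7"
  shows "(\<Sum>j<7. \<Sum>k<7. \<omega> [b, j, k] *\<^sub>R (gamma j *v (gamma k *v Psi))) = 6 *\<^sub>R (gamma b *v Psi)"
proof -
  have "(\<Sum>k<7. \<omega> [b, j, k] *\<^sub>R (gamma j *v (gamma k *v Psi))) = (if j = b then 0 else gamma b *v Psi)"
    if j: "j < 7" for j
  proof (cases "j = b")
    case True
    then show ?thesis using omega3_not_distinct[of b b] b by simp
  next
    case False
    have "(\<Sum>k<7. \<omega> [b, j, k] *\<^sub>R (gamma j *v (gamma k *v Psi)))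
        = gamma j *v (gamma b *v (gamma j *v Psi))"
      using gamma_gamma_Psi_expansion[of b j] b j False
      by (simp add: vec.sum matrix_vector_mult_scaleR)
    also have "\<dots> = gamma b *v Psi"
      using gamma_anticomm_vec[of b j] gamma_square_vec[of j] b j False by (simp add: vec.neg)
    finally show ?thesis using False by simp
  qed
  then have "(\<Sum>j<7. \<Sum>k<7. \<omega> [b, j, k] *\<^sub>R (gamma j *v (gamma k *v Psi)))
      = (\<Sum>j\<in>{..<7} - {b}. gamma b *v Psi)"
    using b by (simp add: sum.If_cases Diff_eq Compl_eq)
  also have "\<dots> = 6 *\<^sub>R (gamma b *v Psi)"
    using b by (simp add: sum_constant_scaleR del: sum_constant)
  finally show ?thesis .
qed

lemma omega3_sort: "distinct xs \<Longrightarrow> set xs \<subseteq> {..<7} \<Longrightarrow> \<omega> xs = inversion_sign xs * \<omega> (sort xs)"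
  using gprod_sort[of xs] by (simp add: omega3_def matrix_vector_mult_scaleR_left)

lemma omega3_Cons_sort:
  "distinct xs \<Longrightarrow> set xs \<subseteq> {..<7} \<Longrightarrow> \<omega> (b # xs) = inversion_sign xs * \<omega> (b # sort xs)"
  using gprod_sort[of xs] by (simp add: omega3_def matrix_vector_mult_scaleR_left matrix_mul_scaleR_right)

lemma omega3_Cons_insort:
  "b < 7 \<Longrightarrow> set ys \<subseteq> {..<7} \<Longrightarrow> b \<notin> set ys \<Longrightarrow> \<omega> (b # ys) = insort_sign b ys * \<omega> (insort b ys)"
  using gprod_insort[of b ys] by (simp add: omega3_def matrix_vector_mult_scaleR_left)

lemma form_act_omega3_Cons:
  assumes b: "b < 7"
  shows "form_act gamma 2 (\<lambda>l. \<omega> (b # l)) = - (gamma b ** restricted_form_act gamma 3 (\<lambda>J. b \<in> J) \<omega>)"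
proof -
  have "form_act gamma 2 (\<lambda>l. \<omega> (b # l)) = - (gamma b ** restricted_form_act gamma (Suc 2) (\<lambda>J. b \<in> J) \<omega>)"
  proof (rule form_act_Cons[OF b])
    fix T assume T: "T \<in> k_subsets {..<7} 2" "b \<in> T"
    then have T': "T \<subseteq> {..<7}" "card T = 2" "finite T" using k_subsetsD by blast+
    then have "length (sorted_list_of_set T) = 2" by simp
    then obtain x y where xy: "sorted_list_of_set T = [x, y]"
      by (metis length_0_conv length_Suc_conv numeral_2_eq_2)
    moreover have "set (sorted_list_of_set T) = T" using T' by simp
    ultimately have "x < 7" "y < 7" "b \<in> {x, y}" using T' T(2) by auto
    then show "\<omega> (b # sorted_list_of_set T) = 0"
      using xy omega3_not_distinct[of b x y] b by auto
  next
    fix T assume T: "T \<in> k_subsets {..<7} 2" "b \<notin> T"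
    then have "T \<subseteq> {..<7}" "finite T" using k_subsetsD by blast+
    with T show "\<omega> (b # sorted_list_of_set T)
        = insort_sign b (sorted_list_of_set T) * \<omega> (insort b (sorted_list_of_set T))"
      using omega3_Cons_insort[OF b] by simp
  qed
  then show ?thesis by (simp add: numeral_3_eq_3 numeral_2_eq_2)
qed

lemma form_act_hodge3_Cons:
  assumes b: "b < 7"
  shows "form_act gamma 3 (\<lambda>l. hodge3 \<omega> (b # l))
    = - (gamma b ** restricted_form_act gamma 4 (\<lambda>J. b \<in> J) (hodge3 \<omega>))"
proof -
  have "form_act gamma 3 (\<lambda>l. hodge3 \<omega> (b # l))
      = - (gamma b ** restricted_form_act gamma (Suc 3) (\<lambda>J. b \<in> J) (hodge3 \<omega>))"
  proof (rule form_act_Cons[OF b])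
    fix T :: "nat set" assume "T \<in> k_subsets {..<7} 3"
    then have T: "T \<subseteq> {..<7}" "finite T" using k_subsetsD by blast+
    then show "hodge3 \<omega> (b # sorted_list_of_set T) = 0" if "b \<in> T"
      using that by (simp add: hodge3_Cons_member)
    show "hodge3 \<omega> (b # sorted_list_of_set T)
        = insort_sign b (sorted_list_of_set T) * hodge3 \<omega> (insort b (sorted_list_of_set T))" if "b \<notin> T"
      using T that by (simp add: hodge3_Cons_insort[OF b])
  qed
  then show ?thesis by (simp add: numeral_3_eq_3 numeral_Bit0)
qed

text \<open>Each 2-subset occurs twice among the ordered pairs, so the action is half of the
  ordered sum, which is 6 e_b \<cdot> \<Psi> by sum_omega3_gamma_gamma_Psi.\<close>
lemma form_act_omega3_Cons_Psi:
  assumes b: "b < 7"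
  shows "form_act gamma 2 (\<lambda>l. \<omega> (b # l)) *v Psi = 3 *\<^sub>R (gamma b *v Psi)"
proof -
  have "form_act gamma 2 (\<lambda>l. \<omega> (b # l))
      = (1/2) *\<^sub>R (\<Sum>U\<in>{U \<in> k_subsets {..<7} 2. True}.
          fact 2 *\<^sub>R (\<omega> (b # sorted_list_of_set U) *\<^sub>R gprod gamma (sorted_list_of_set U)))"
    by (simp add: form_act_def k_subsets_def scaleR_right.sum fact_numeral)
  also have "(\<Sum>U\<in>{U \<in> k_subsets {..<7} 2. True}.
          fact 2 *\<^sub>R (\<omega> (b # sorted_list_of_set U) *\<^sub>R gprod gamma (sorted_list_of_set U)))
      = (\<Sum>xs\<in>k_lists {..<7} 2. if distinct xs \<and> True then \<omega> (b # xs) *\<^sub>R gprod gamma xs else 0)"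
  proof (rule sum_distinct_k_lists[symmetric])
    fix xs :: "nat list" assume xs: "distinct xs" "set xs \<subseteq> {..<7}"
    then have "\<omega> (b # xs) *\<^sub>R gprod gamma xs
        = (inversion_sign xs * inversion_sign xs) *\<^sub>R (\<omega> (b # sort xs) *\<^sub>R gprod gamma (sort xs))"
      using omega3_Cons_sort[OF xs] gprod_sort[OF xs] by (simp add: algebra_simps)
    with xs show "\<omega> (b # xs) *\<^sub>R gprod gamma xs
        = \<omega> (b # sorted_list_of_set (set xs)) *\<^sub>R gprod gamma (sorted_list_of_set (set xs))"
      by (simp add: inversion_sign_square sorted_list_of_set_sort_remdups distinct_remdups_id)
  qed simp
  also have "\<dots> = (\<Sum>j<7. \<Sum>k<7. \<omega> [b, j, k] *\<^sub>R gprod gamma [j, k])"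
    unfolding sum_k_lists_2
    by (intro sum.cong refl) (use omega3_not_distinct[of b] b in auto)
  finally have "form_act gamma 2 (\<lambda>l. \<omega> (b # l)) *v Psi
      = (1/2) *\<^sub>R (\<Sum>j<7. \<Sum>k<7. \<omega> [b, j, k] *\<^sub>R (gamma j *v (gamma k *v Psi)))"
    by (simp add: matrix_vector_mult_sum_left matrix_vector_mult_scaleR_left matrix_vector_mul_assoc)
  then show ?thesis
    using sum_omega3_gamma_gamma_Psi[OF b] by simp
qed

lemma restricted_form_act_member_omega3_Psi:
  assumes b: "b < 7"
  shows "restricted_form_act gamma 3 (\<lambda>J. b \<in> J) \<omega> *v Psi = (-3) *\<^sub>R Psi"
proof -
  let ?S = "restricted_form_act gamma 3 (\<lambda>J. b \<in> J) \<omega>"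
  have "gamma b *v (?S *v Psi) = (-3) *\<^sub>R (gamma b *v Psi)"
    using form_act_omega3_Cons_Psi[OF b] form_act_omega3_Cons[OF b]
    by (simp add: matrix_vector_mult_neg_left matrix_vector_mul_assoc minus_equation_iff[of "_ *v Psi"])
  then have "gamma b *v (gamma b *v (?S *v Psi)) = (-3) *\<^sub>R (gamma b *v (gamma b *v Psi))"
    by (simp add: matrix_vector_mult_scaleR vec.neg)
  then show ?thesis
    using gamma_square_vec[OF b] by (simp add: minus_equation_iff[of "_ *v Psi"])
qed

lemma form_act_omega3_Psi: "form_act gamma 3 \<omega> *v Psi = (-7) *\<^sub>R Psi"
proof -
  have "3 *\<^sub>R (form_act gamma 3 \<omega> *v Psi) = (\<Sum>b<7. restricted_form_act gamma 3 (\<lambda>J. b \<in> J) \<omega> *v Psi)"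
    using sum_restricted_form_act_member[of gamma 3 \<omega>]
    by (simp add: matrix_vector_mult_sum_left[symmetric] matrix_vector_mult_scaleR_left)
  also have "\<dots> = 3 *\<^sub>R ((-7) *\<^sub>R Psi)"
    by (simp add: restricted_form_act_member_omega3_Psi)
  finally show ?thesis by (metis scaleR_cancel_left zero_neq_numeral)
qed

lemma restricted_form_act_not_member_omega3_Psi:
  "b < 7 \<Longrightarrow> restricted_form_act gamma 3 (\<lambda>J. b \<notin> J) \<omega> *v Psi = (-4) *\<^sub>R Psi"
  by (simp add: restricted_form_act_compl matrix_vector_mult_diff_rdistrib form_act_omega3_Psi
      restricted_form_act_member_omega3_Psi flip: scaleR_left_diff_distrib)

lemma cliff_vec_Psi: "cliff_vec gamma X *v Psi = (\<Sum>b<7. coord7 X b *\<^sub>R (gamma b *v Psi))"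
  by (simp add: cliff_vec_def matrix_vector_mult_sum_left matrix_vector_mult_scaleR_left)

lemma cliff_vec_Psi_inner: "i < 7 \<Longrightarrow> (cliff_vec gamma X *v Psi) \<bullet> (gamma i *v Psi) = coord7 X i"
  by (simp add: cliff_vec_Psi inner_sum_left gamma_Psi_inner if_distrib cong: if_cong)

lemma form_act_contr_omega3_Psi: "form_act gamma 2 (contr X \<omega>) *v Psi = 3 *\<^sub>R (cliff_vec gamma X *v Psi)"
  unfolding form_act_contr cliff_vec_Psi
  by (simp add: matrix_vector_mult_sum_left matrix_vector_mult_scaleR_left form_act_omega3_Cons_Psi
      scaleR_right.sum mult.commute)

lemma form_act_contr_hodge3_Psi:
  "form_act gamma 3 (contr X (hodge3 \<omega>)) *v Psi = 4 *\<^sub>R (cliff_vec gamma X *v Psi)"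
proof -
  have "form_act gamma 3 (\<lambda>l. hodge3 \<omega> (b # l)) *v Psi = 4 *\<^sub>R (gamma b *v Psi)" if b: "b < 7" for b
  proof -
    have "restricted_form_act gamma 4 (\<lambda>J. b \<in> J) (hodge3 \<omega>)
        = restricted_form_act gamma 3 (\<lambda>U. b \<in> {..<7} - U) \<omega>"
      by (rule restricted_form_act_hodge3) (rule omega3_sort)
    also have "\<dots> = restricted_form_act gamma 3 (\<lambda>U. b \<notin> U) \<omega>"
      using b by (intro restricted_form_act_cong) auto
    finally show ?thesis
      using form_act_hodge3_Cons[OF b] restricted_form_act_not_member_omega3_Psi[OF b]
      by (simp add: matrix_vector_mult_neg_left matrix_vector_mul_assoc[symmetric]
          matrix_vector_mult_scaleR vec.neg)
  qed
  then show ?thesis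
    unfolding form_act_contr cliff_vec_Psi
    by (simp add: matrix_vector_mult_sum_left matrix_vector_mult_scaleR_left scaleR_right.sum mult.commute)
qed

lemma form_act_wedge1_hodge3_Psi:
  "form_act gamma 5 (wedge1 X (hodge3 \<omega>)) *v Psi = (-3) *\<^sub>R (cliff_vec gamma X *v Psi)"
proof -
  have "gamma b ** restricted_form_act gamma 4 (\<lambda>V. b \<notin> V) (hodge3 \<omega>) *v Psi = (-3) *\<^sub>R (gamma b *v Psi)"
    if b: "b < 7" for b
  proof -
    have "restricted_form_act gamma 4 (\<lambda>V. b \<notin> V) (hodge3 \<omega>)
        = restricted_form_act gamma 3 (\<lambda>U. b \<notin> {..<7} - U) \<omega>"
      by (rule restricted_form_act_hodge3) (rule omega3_sort)
    also have "\<dots> = restricted_form_act gamma 3 (\<lambda>U. b \<in> U) \<omega>"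
      using b by (intro restricted_form_act_cong) auto
    finally show ?thesis
      using restricted_form_act_member_omega3_Psi[OF b]
      by (simp add: matrix_vector_mul_assoc[symmetric] matrix_vector_mult_scaleR vec.neg)
  qed
  moreover have "form_act gamma 5 (wedge1 X (hodge3 \<omega>))
      = (\<Sum>b<7. coord7 X b *\<^sub>R (gamma b ** restricted_form_act gamma 4 (\<lambda>V. b \<notin> V) (hodge3 \<omega>)))"
    using form_act_wedge1[of 4 X "hodge3 \<omega>"] by simp
  ultimately have "form_act gamma 5 (wedge1 X (hodge3 \<omega>)) *v Psi
      = (\<Sum>b<7. coord7 X b *\<^sub>R ((-3) *\<^sub>R (gamma b *v Psi)))"
    by (simp add: matrix_vector_mult_sum_left matrix_vector_mult_scaleR_left)
  then show ?thesis
    by (simp add: cliff_vec_Psi scaleR_right.sum mult.commute)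
qed

lemma spinor_operator_Psi:
  "(cliff_vec gamma X
    + (r / 4) *\<^sub>R form_act gamma 2 (contr X \<omega>)
    + p *\<^sub>R form_act gamma 3 (contr X (hodge3 \<omega>))
    + q *\<^sub>R form_act gamma 5 (wedge1 X (hodge3 \<omega>))) *v Psi
   = (1 + 3 * r / 4 + 4 * p - 3 * q) *\<^sub>R (cliff_vec gamma X *v Psi)"
  by (simp add: matrix_vector_mult_add_rdistrib matrix_vector_mult_scaleR_left form_act_contr_omega3_Psi
      form_act_contr_hodge3_Psi form_act_wedge1_hodge3_Psi algebra_simps)

end

theorem mainTheorem3:
  fixes gamma :: "nat \<Rightarrow> real^8^8" and Psi :: "real^8" and p q r :: real
  assumes clifford: "\<forall>i<7. \<forall>j<7. gamma i ** gamma j + gamma j ** gamma i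
                       = (if i = j then -2 else 0) *\<^sub>R mat 1"
      and skew: "\<forall>i<7. transpose (gamma i) = - gamma i"
      and orientation: "gprod gamma [0..<7] = mat 1"
      and unit: "norm Psi = 1"
  shows "(\<forall>X :: real^7.
            (cliff_vec gamma X
             + (r / 4) *\<^sub>R form_act gamma 2 (contr X (omega3 gamma Psi))
             + p *\<^sub>R form_act gamma 3 (contr X (hodge3 (omega3 gamma Psi)))
             + q *\<^sub>R form_act gamma 5 (wedge1 X (hodge3 (omega3 gamma Psi)))) *v Psi = 0)
         \<longleftrightarrow> 16 * p = -4 + 12 * q - 3 * r"
proof -
  interpret spinor7 gamma Psi
    by unfold_locales (fact clifford, fact orientation, fact skew, fact unit)
  have "(cliff_vec gamma (\<chi> i. 1) *v Psi) \<bullet> (gamma 0 *v Psi) = 1"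
    using cliff_vec_Psi_inner[of 0] by (simp add: coord7_def)
  then have "cliff_vec gamma (\<chi> i. 1) *v Psi \<noteq> 0" by auto
  then have "(\<forall>X :: real^7. (1 + 3 * r / 4 + 4 * p - 3 * q) *\<^sub>R (cliff_vec gamma X *v Psi) = 0)
      \<longleftrightarrow> 1 + 3 * r / 4 + 4 * p - 3 * q = 0"
    by auto
  also have "\<dots> \<longleftrightarrow> 16 * p = -4 + 12 * q - 3 * r"
    by (rule iffI) linarith+
  finally show ?thesis
    unfolding spinor_operator_Psi .
qed

end
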